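(* Consider the general load coupling model with JT described in the context. Let $\bm\kappa,\bm\kappa'\in\{0,1\}^{n\times m}$ be JT patterns such that, for some cell $i$ and UE $j$, $\kappa_{ij}=0$, $\kappa'_{ij}=1$, and $\kappa'_{hl}=\kappa_{hl}$ for all $(h,l)\neq(i,j)$. Then for all $\bm{x}\in\mathbb{R}^n_{\ge 0}$, componentwise, $\bm{f}^{\bm\kappa}\big(\bm{h}^{\bm{\kappa'}}(\bm{x})\big)\leq\min\left\{\bm{f}^{\bm\kappa}\big(\bm{h}^{\bm\kappa}(\bm{x})\big),\ \bm{f}^{\bm{\kappa'}}\big(\bm{h}^{\bm{\kappa'}}(\bm{x})\big)\right\}$.
   Context: There are $n$ cells and $m$ UEs. Cell $i$ has transmit power per resource block $p_i>0$, $g_{ij}>0$ is the channel gain between cell $i$ and UE $j$, $d_j>0$ is the (normalized) bitrate demand of UE $j$, and $\sigma^2>0$ is the noise power. A JT pattern is a matrix $\bm\kappa\in\{0,1\}^{n\times m}$, where $\kappa_{ij}=1$ means cell $i$ serves UE $j$; every UE is assumed to be served by at least one cell. For a pattern $\bm\kappa$, the cell load function $\bm f^{\bm\kappa}=(f^{\bm\kappa}_1,\dots,f^{\bm\kappa}_n)$ and SINR function $\bm h^{\bm\kappa}=(h^{\bm\kappa}_1,\dots,h^{\bm\kappa}_m)$ are $f_i^{\bm{\kappa}}(\bm{\gamma})=\sum_{j=1}^{m}\frac{\kappa_{ij}d_j}{\log_2\left(1+\gamma_j\right)}$, $\quad h_j^{\bm{\kappa}}(\bm{x})=\frac{\sum_{i=1}^{n}p_ig_{ij}\kappa_{ij}}{\sum_{k=1}^{n}p_kg_{kj}x_{k}(1-\kappa_{kj})+\sigma^2}$,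 for $\bm\gamma\in\mathbb{R}^m_{>0}$ and $\bm x\in\mathbb{R}^n_{\ge0}$. Inequalities and $\min$ between vectors are componentwise. *)

theory Defs
  imports "HOL-Analysis.Analysis"
begin

text \<open>Cells are indexed by 0..<n, UEs by 0..<m. A JT pattern is a 0/1 matrix,
  represented as a boolean relation kappa i j (cell i serves UE j).\<close>

definition of_pat :: "(nat \<Rightarrow> nat \<Rightarrow> bool) \<Rightarrow> nat \<Rightarrow> nat \<Rightarrow> real" where
  "of_pat \<kappa> i j = (if \<kappa> i j then 1 else 0)"

definition load_f :: "nat \<Rightarrow> (nat \<Rightarrow> real) \<Rightarrow> (nat \<Rightarrow> nat \<Rightarrow> bool) \<Rightarrow> (nat \<Rightarrow> real) \<Rightarrow> nat \<Rightarrow> real" where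
  "load_f m d \<kappa> \<gamma> i = (\<Sum>j<m. of_pat \<kappa> i j * d j / log 2 (1 + \<gamma> j))"

definition sinr_h :: "nat \<Rightarrow> (nat \<Rightarrow> real) \<Rightarrow> (nat \<Rightarrow> nat \<Rightarrow> real) \<Rightarrow> real \<Rightarrow> (nat \<Rightarrow> nat \<Rightarrow> bool) \<Rightarrow> (nat \<Rightarrow> real) \<Rightarrow> nat \<Rightarrow> real" where
  "sinr_h n p g \<sigma>2 \<kappa> x j =
     (\<Sum>i<n. p i * g i j * of_pat \<kappa> i j) /
     ((\<Sum>k<n. p k * g k j * x k * (1 - of_pat \<kappa> k j)) + \<sigma>2)"

end

theory Submission
  imports Defs
begin

text \<open>Enlarging a pattern moves
  cells from the interference term of the SINR denominator into the numerator, so the SINR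
  of every UE grows; since the load is antitone in the SINR, the loads under the
  old pattern drop. Evaluated at the same SINR, the larger pattern only adds
  nonnegative summands to each cell load.\<close>

lemma of_pat_nonneg: "0 \<le> of_pat \<kappa> k l"
  and of_pat_le_one: "of_pat \<kappa> k l \<le> 1"
  by (auto simp: of_pat_def)

lemma of_pat_mono: "(\<kappa> k l \<Longrightarrow> \<kappa>' k l) \<Longrightarrow> of_pat \<kappa> k l \<le> of_pat \<kappa>' k l"
  by (auto simp: of_pat_def)

lemma sinr_denominator_pos:
  assumes "\<And>k. k < n \<Longrightarrow> 0 \<le> p k * g k l * x k" and "\<sigma>2 > 0"
  shows "0 < (\<Sum>k<n. p k * g k l * x k * (1 - of_pat \<kappa> k l)) + \<sigma>2"
proof -
  have "0 \<le> (\<Sum>k<n. p k * g k l * x k * (1 - of_pat \<kappa> k l))"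
    using assms(1) by (intro sum_nonneg) (simp add: of_pat_le_one)
  with assms(2) show ?thesis by linarith
qed

lemma sinr_h_pos:
  assumes "\<And>k. k < n \<Longrightarrow> p k > 0" "\<And>k. k < n \<Longrightarrow> g k l > 0"
    and "\<And>k. k < n \<Longrightarrow> x k \<ge> 0" and "\<sigma>2 > 0"
    and "\<exists>k<n. \<kappa> k l"
  shows "0 < sinr_h n p g \<sigma>2 \<kappa> x l"
proof -
  obtain k where k: "k < n" "\<kappa> k l" using assms(5) by blast
  have "0 < p k * g k l * of_pat \<kappa> k l" using k assms(1,2) by (simp add: of_pat_def)
  also have "\<dots> \<le> (\<Sum>i<n. p i * g i l * of_pat \<kappa> i l)"
    using k assms(1,2) by (intro member_le_sum) (auto simp: of_pat_nonneg less_imp_le)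
  finally show ?thesis
    unfolding sinr_h_def using assms(1-4)
    by (intro divide_pos_pos sinr_denominator_pos mult_nonneg_nonneg) (auto intro: less_imp_le)
qed

lemma sinr_h_mono_pattern:
  assumes "\<And>k. k < n \<Longrightarrow> p k > 0" "\<And>k. k < n \<Longrightarrow> g k l > 0"
    and "\<And>k. k < n \<Longrightarrow> x k \<ge> 0" and "\<sigma>2 > 0"
    and sub: "\<And>k. k < n \<Longrightarrow> \<kappa> k l \<Longrightarrow> \<kappa>' k l"
  shows "sinr_h n p g \<sigma>2 \<kappa> x l \<le> sinr_h n p g \<sigma>2 \<kappa>' x l"
proof -
  have gain: "k < n \<Longrightarrow> 0 \<le> p k * g k l * x k" for k
    using assms(1-3) by (intro mult_nonneg_nonneg) (auto intro: less_imp_le)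
  have num: "(\<Sum>i<n. p i * g i l * of_pat \<kappa> i l) \<le> (\<Sum>i<n. p i * g i l * of_pat \<kappa>' i l)"
    using assms(1,2) sub by (intro sum_mono mult_left_mono of_pat_mono) (auto intro: less_imp_le)
  have den: "(\<Sum>k<n. p k * g k l * x k * (1 - of_pat \<kappa>' k l))
      \<le> (\<Sum>k<n. p k * g k l * x k * (1 - of_pat \<kappa> k l))"
    using gain sub by (intro sum_mono mult_left_mono) (auto intro: of_pat_mono)
  have "0 \<le> (\<Sum>i<n. p i * g i l * of_pat \<kappa>' i l)"
    using assms(1,2) by (intro sum_nonneg) (simp add: of_pat_nonneg less_imp_le)
  with num den show ?thesis
    unfolding sinr_h_def
    by (intro frac_le sinr_denominator_pos) (use gain assms(4) in auto)
qed

lemma load_f_antimono_sinr: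
  assumes "\<And>l. l < m \<Longrightarrow> d l \<ge> 0"
    and "\<And>l. l < m \<Longrightarrow> 0 < \<gamma> l" and "\<And>l. l < m \<Longrightarrow> \<gamma> l \<le> \<gamma>' l"
  shows "load_f m d \<kappa> \<gamma>' c \<le> load_f m d \<kappa> \<gamma> c"
  unfolding load_f_def
proof (intro sum_mono)
  fix l assume "l \<in> {..<m}"
  then have l: "l < m" by simp
  have "0 < log 2 (1 + \<gamma> l)" "log 2 (1 + \<gamma> l) \<le> log 2 (1 + \<gamma>' l)"
    using assms(2,3)[OF l] by auto
  then show "of_pat \<kappa> c l * d l / log 2 (1 + \<gamma>' l) \<le> of_pat \<kappa> c l * d l / log 2 (1 + \<gamma> l)"
    using assms(1)[OF l] by (intro divide_left_mono) (auto simp: of_pat_nonneg)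
qed

lemma load_f_mono_pattern:
  assumes "\<And>l. l < m \<Longrightarrow> d l \<ge> 0" and "\<And>l. l < m \<Longrightarrow> 0 < \<gamma> l"
    and sub: "\<And>l. l < m \<Longrightarrow> \<kappa> c l \<Longrightarrow> \<kappa>' c l"
  shows "load_f m d \<kappa> \<gamma> c \<le> load_f m d \<kappa>' \<gamma> c"
  unfolding load_f_def
proof (intro sum_mono)
  fix l assume "l \<in> {..<m}"
  then have l: "l < m" by simp
  have rate_nonneg: "0 \<le> d l / log 2 (1 + \<gamma> l)"
    using assms(1,2)[OF l] by simp
  show "of_pat \<kappa> c l * d l / log 2 (1 + \<gamma> l) \<le> of_pat \<kappa>' c l * d l / log 2 (1 + \<gamma> l)"
    using mult_right_mono[OF of_pat_mono[of \<kappa> c l \<kappa>', OF sub[OF l]] rate_nonneg] by simp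
qed

theorem lemma3:
  fixes n m :: nat
    and p d :: "nat \<Rightarrow> real"
    and g :: "nat \<Rightarrow> nat \<Rightarrow> real"
    and \<sigma>2 :: real
    and \<kappa> \<kappa>' :: "nat \<Rightarrow> nat \<Rightarrow> bool"
    and i j :: nat
    and x :: "nat \<Rightarrow> real"
  assumes p_pos: "\<And>c. c < n \<Longrightarrow> p c > 0"
    and g_pos: "\<And>c u. c < n \<Longrightarrow> u < m \<Longrightarrow> g c u > 0"
    and d_pos: "\<And>u. u < m \<Longrightarrow> d u > 0"
    and sigma_pos: "\<sigma>2 > 0"
    and served: "\<And>u. u < m \<Longrightarrow> \<exists>c<n. \<kappa> c u"
    and served': "\<And>u. u < m \<Longrightarrow> \<exists>c<n. \<kappa>' c u"
    and ij: "i < n" "j < m"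
    and k_ij: "\<not> \<kappa> i j" and k'_ij: "\<kappa>' i j"
    and same: "\<And>h l. h < n \<Longrightarrow> l < m \<Longrightarrow> (h, l) \<noteq> (i, j) \<Longrightarrow> \<kappa>' h l = \<kappa> h l"
    and x_nonneg: "\<And>c. c < n \<Longrightarrow> x c \<ge> 0"
  shows "\<forall>c<n. load_f m d \<kappa> (sinr_h n p g \<sigma>2 \<kappa>' x) c
            \<le> min (load_f m d \<kappa> (sinr_h n p g \<sigma>2 \<kappa> x) c)
                   (load_f m d \<kappa>' (sinr_h n p g \<sigma>2 \<kappa>' x) c)"
proof (intro allI impI)
  fix c assume "c < n"
  have sub: "k < n \<Longrightarrow> l < m \<Longrightarrow> \<kappa> k l \<Longrightarrow> \<kappa>' k l" for k l
    using same[of k l] k_ij by (cases "(k, l) = (i, j)") auto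
  have d_nonneg: "l < m \<Longrightarrow> d l \<ge> 0" for l
    using d_pos[of l] by simp
  have sinr_pos: "l < m \<Longrightarrow> 0 < sinr_h n p g \<sigma>2 \<kappa> x l" for l
    using p_pos g_pos x_nonneg sigma_pos served by (intro sinr_h_pos) auto
  have sinr_pos': "l < m \<Longrightarrow> 0 < sinr_h n p g \<sigma>2 \<kappa>' x l" for l
    using p_pos g_pos x_nonneg sigma_pos served' by (intro sinr_h_pos) auto
  have "load_f m d \<kappa> (sinr_h n p g \<sigma>2 \<kappa>' x) c \<le> load_f m d \<kappa> (sinr_h n p g \<sigma>2 \<kappa> x) c"
    using d_nonneg sinr_pos p_pos g_pos x_nonneg sigma_pos sub
    by (intro load_f_antimono_sinr sinr_h_mono_pattern) auto
  moreover have "load_f m d \<kappa> (sinr_h n p g \<sigma>2 \<kappa>' x) c \<le> load_f m d \<kappa>' (sinr_h n p g \<sigma>2 \<kappa>' x) c"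
    using d_nonneg sinr_pos' sub \<open>c < n\<close> by (intro load_f_mono_pattern) auto
  ultimately show "load_f m d \<kappa> (sinr_h n p g \<sigma>2 \<kappa>' x) c
            \<le> min (load_f m d \<kappa> (sinr_h n p g \<sigma>2 \<kappa> x) c)
                   (load_f m d \<kappa>' (sinr_h n p g \<sigma>2 \<kappa>' x) c)"
    by simp
qed

end
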